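(* Let $\Bbbk$ be a field of characteristic zero. The algebra $A=\Bbbk[x_1,\ldots,x_6]/(x_1^3,x_2^3,x_3^3,x_4^3,x_5^3,x_6^3,x_1 x_2 x_3)$ fails the WLP in degree $5$.
   Context: For a monomial quotient $A$, $A$ fails the WLP in degree $i$ if $\times(x_1+\cdots+x_6): A_i\to A_{i+1}$ is neither injective nor surjective. *)

theory Defs
  imports "HOL-Library.Poly_Mapping"
begin

text \<open>Polynomials over a coefficient ring 'a in variables x_0, x_1, ... :
  finitely supported maps from monomials (exponent vectors, nat =>0 nat) to coefficients.
  The polynomial ring k[x_1..x_n] is the subset of polynomials only involving x_0..x_(n-1).\<close>

type_synonym 'a mpoly = "(nat \<Rightarrow>\<^sub>0 nat) \<Rightarrow>\<^sub>0 'a"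

definition Var :: "nat \<Rightarrow> ('a::comm_ring_1) mpoly" where
  "Var i = Poly_Mapping.single (Poly_Mapping.single i 1) 1"

definition in_vars :: "nat \<Rightarrow> ('a::comm_ring_1) mpoly \<Rightarrow> bool" where
  "in_vars n p \<longleftrightarrow> (\<forall>m\<in>Poly_Mapping.keys p. Poly_Mapping.keys m \<subseteq> {..<n})"

definition mdeg :: "(nat \<Rightarrow>\<^sub>0 nat) \<Rightarrow> nat" where
  "mdeg m = (\<Sum>i\<in>Poly_Mapping.keys m. Poly_Mapping.lookup m i)"

definition homog :: "nat \<Rightarrow> ('a::comm_ring_1) mpoly \<Rightarrow> bool" where
  "homog d p \<longleftrightarrow> (\<forall>m\<in>Poly_Mapping.keys p. mdeg m = d)"

definition in_ideal :: "nat \<Rightarrow> ('a::comm_ring_1) mpoly list \<Rightarrow> 'a mpoly \<Rightarrow> bool" where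
  "in_ideal n gs p \<longleftrightarrow>
     (\<exists>c. (\<forall>k<length gs. in_vars n (c k)) \<and> p = (\<Sum>k<length gs. c k * gs ! k))"

definition lin_form :: "nat \<Rightarrow> ('a::comm_ring_1) mpoly" where
  "lin_form n = (\<Sum>i<n. Var i)"

text \<open>A = k[x_1..x_n]/(gs), with gs homogeneous. A_i is the space of homogeneous degree-i
  polynomials modulo the ideal. The map x(x_1+...+x_n): A_i -> A_(i+1).\<close>
definition mult_injective :: "nat \<Rightarrow> ('a::comm_ring_1) mpoly list \<Rightarrow> nat \<Rightarrow> bool" where
  "mult_injective n gs i \<longleftrightarrow>
     (\<forall>f. in_vars n f \<and> homog i f \<and> in_ideal n gs (lin_form n * f) \<longrightarrow> in_ideal n gs f)"

definition mult_surjective :: "nat \<Rightarrow> ('a::comm_ring_1) mpoly list \<Rightarrow> nat \<Rightarrow> bool" where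
  "mult_surjective n gs i \<longleftrightarrow>
     (\<forall>g. in_vars n g \<and> homog (Suc i) g \<longrightarrow>
        (\<exists>f. in_vars n f \<and> homog i f \<and> in_ideal n gs (g - lin_form n * f)))"

definition fails_WLP_in_degree :: "nat \<Rightarrow> ('a::comm_ring_1) mpoly list \<Rightarrow> nat \<Rightarrow> bool" where
  "fails_WLP_in_degree n gs i \<longleftrightarrow> \<not> mult_injective n gs i \<and> \<not> mult_surjective n gs i"

end

theory Submission
  imports Defs
begin

(* A weight function psi on monomials induces the linear functional p |-> sum_m p_m psi(m).
   It vanishes on a monomial ideal if psi vanishes on all multiples of the generators, and on
   all multiples of L = x_0 + ... + x_5 if sum_i psi(m x_i) = 0 for every monomial m.
   Let V(x,y,z) = (x - y)(y - z)(x - z) be the Vandermonde product.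

   Surjectivity fails: the coefficient function of V(x_0,x_1,x_2) V(x_3,x_4,x_5) has both
   properties (V contains no cube and no xyz, and its coefficients satisfy the second condition
   for x + y + z), yet it takes the value 1 on x_0^2 x_1 x_3^2 x_4.

   Injectivity fails: for q = x_0^2 + x_1^2 + x_2^2 - x_0 x_1 - x_0 x_2 - x_1 x_2 we have
   (x_0 + x_1 + x_2) q = x_0^3 + x_1^3 + x_2^3 - 3 x_0 x_1 x_2, and (x_3 + x_4 + x_5) V(x_3,x_4,x_5)
   lies in (x_3^3, x_4^3, x_5^3), so L q V(x_3,x_4,x_5) lies in the ideal. But q V(x_3,x_4,x_5)
   contains the monomial x_0^2 x_3^2 x_4, which is not in the ideal, with coefficient 1. *)

lemma mdeg_add: "mdeg (a + b) = mdeg a + mdeg b"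
  unfolding mdeg_def by (rule setsum_keys_plus_distrib[where f = "\<lambda>_ v. v"]) simp_all

lemma mdeg_single: "mdeg (Poly_Mapping.single i k) = k"
  by (simp add: mdeg_def)

lemma homog_add: "homog d p \<Longrightarrow> homog d q \<Longrightarrow> homog d (p + q)"
  unfolding homog_def by (meson Un_iff keys_add subsetD)

lemma homog_diff: "homog d p \<Longrightarrow> homog d q \<Longrightarrow> homog d (p - q)"
  unfolding homog_def by (meson Un_iff keys_diff subsetD)

lemma homog_mult:
  assumes "homog d p" and "homog e q"
  shows "homog (d + e) (p * q)"
  unfolding homog_def
proof
  fix m
  assume "m \<in> Poly_Mapping.keys (p * q)"
  then obtain a b where "m = a + b" "a \<in> Poly_Mapping.keys p" "b \<in> Poly_Mapping.keys q"
    using keys_mult[of p q] by blast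
  then show "mdeg m = d + e"
    using assms unfolding homog_def by (simp add: mdeg_add)
qed

lemma homog_Var: "homog 1 (Var i)"
  by (simp add: homog_def Var_def mdeg_def)

lemma in_vars_0 [simp]: "in_vars n 0"
  by (simp add: in_vars_def)

lemma in_vars_1 [simp]: "in_vars n 1"
  by (simp add: in_vars_def)

lemma in_vars_numeral: "in_vars n (numeral k)"
  by (simp add: in_vars_def flip: single_numeral)

lemma in_vars_add: "in_vars n p \<Longrightarrow> in_vars n q \<Longrightarrow> in_vars n (p + q)"
  unfolding in_vars_def by (meson Un_iff keys_add subsetD)

lemma in_vars_uminus: "in_vars n p \<Longrightarrow> in_vars n (- p)"
  unfolding in_vars_def by simp

lemma in_vars_diff: "in_vars n p \<Longrightarrow> in_vars n q \<Longrightarrow> in_vars n (p - q)"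
  unfolding in_vars_def by (meson Un_iff keys_diff subsetD)

lemma in_vars_mult:
  assumes "in_vars n p" and "in_vars n q"
  shows "in_vars n (p * q)"
  unfolding in_vars_def
proof
  fix m
  assume "m \<in> Poly_Mapping.keys (p * q)"
  then obtain a b where "m = a + b" "a \<in> Poly_Mapping.keys p" "b \<in> Poly_Mapping.keys q"
    using keys_mult[of p q] by blast
  with assms keys_add[of a b] show "Poly_Mapping.keys m \<subseteq> {..<n}"
    unfolding in_vars_def by blast
qed

lemma in_vars_Var: "i < n \<Longrightarrow> in_vars n (Var i)"
  by (simp add: in_vars_def Var_def)

lemma in_ideal_generator:
  assumes "g \<in> set gs"
  shows "in_ideal n gs g"
proof -
  obtain j where j: "j < length gs" "g = gs ! j"
    using assms by (auto simp: in_set_conv_nth)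
  have "(\<Sum>k<length gs. (if k = j then 1 else 0) * gs ! k) =
      (\<Sum>k<length gs. if k = j then gs ! k else 0)"
    by (rule sum.cong) simp_all
  also have "\<dots> = g"
    using j by simp
  finally show ?thesis
    unfolding in_ideal_def by (intro exI[of _ "\<lambda>k. if k = j then 1 else 0"]) simp
qed

lemma in_ideal_add:
  assumes "in_ideal n gs p" and "in_ideal n gs q"
  shows "in_ideal n gs (p + q)"
proof -
  obtain c d where
    "\<forall>k<length gs. in_vars n (c k)" "p = (\<Sum>k<length gs. c k * gs ! k)"
    "\<forall>k<length gs. in_vars n (d k)" "q = (\<Sum>k<length gs. d k * gs ! k)"
    using assms unfolding in_ideal_def by blast
  then show ?thesis
    unfolding in_ideal_def
    by (intro exI[of _ "\<lambda>k. c k + d k"]) (simp add: in_vars_add distrib_right sum.distrib)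
qed

lemma in_ideal_mult_left:
  assumes "in_vars n a" and "in_ideal n gs p"
  shows "in_ideal n gs (a * p)"
proof -
  obtain c where "\<forall>k<length gs. in_vars n (c k)" "p = (\<Sum>k<length gs. c k * gs ! k)"
    using assms(2) unfolding in_ideal_def by blast
  then show ?thesis
    unfolding in_ideal_def using assms(1)
    by (intro exI[of _ "\<lambda>k. a * c k"]) (simp add: in_vars_mult sum_distrib_left mult.assoc)
qed

lemma in_ideal_diff:
  assumes "in_ideal n gs p" and "in_ideal n gs q"
  shows "in_ideal n gs (p - q)"
  using in_ideal_add[OF assms(1) in_ideal_mult_left[OF in_vars_uminus[OF in_vars_1] assms(2)]]
  by simp

lemma Var_power: "Var i ^ k = Poly_Mapping.single (Poly_Mapping.single i k) 1"
  by (induction k) (simp_all add: Var_def mult_single flip: single_add)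

definition dual_eval :: "((nat \<Rightarrow>\<^sub>0 nat) \<Rightarrow> 'a::comm_ring_1) \<Rightarrow> 'a mpoly \<Rightarrow> 'a" where
  "dual_eval \<psi> p = (\<Sum>m\<in>Poly_Mapping.keys p. Poly_Mapping.lookup p m * \<psi> m)"

lemma dual_eval_0 [simp]: "dual_eval \<psi> 0 = 0"
  by (simp add: dual_eval_def)

lemma dual_eval_zero_weight [simp]: "dual_eval (\<lambda>_. 0) p = 0"
  by (simp add: dual_eval_def)

lemma dual_eval_single [simp]: "dual_eval \<psi> (Poly_Mapping.single m c) = c * \<psi> m"
  by (simp add: dual_eval_def)

lemma dual_eval_add: "dual_eval \<psi> (p + q) = dual_eval \<psi> p + dual_eval \<psi> q"
  unfolding dual_eval_def
  by (rule setsum_keys_plus_distrib[where f = "\<lambda>m c. c * \<psi> m"]) (simp_all add: distrib_right)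

lemma dual_eval_uminus: "dual_eval \<psi> (- p) = - dual_eval \<psi> p"
  by (simp add: dual_eval_def sum_negf)

lemma dual_eval_diff: "dual_eval \<psi> (p - q) = dual_eval \<psi> p - dual_eval \<psi> q"
  using dual_eval_add[of \<psi> p "- q"] by (simp add: dual_eval_uminus)

lemma dual_eval_sum: "dual_eval \<psi> (\<Sum>x\<in>A. f x) = (\<Sum>x\<in>A. dual_eval \<psi> (f x))"
  by (induction A rule: infinite_finite_induct) (simp_all add: dual_eval_add)

lemma dual_eval_sum_weights: "dual_eval (\<lambda>m. \<Sum>i\<in>I. \<psi> i m) p = (\<Sum>i\<in>I. dual_eval (\<psi> i) p)"
  by (simp add: dual_eval_def sum_distrib_left sum.swap[of _ I])

lemma poly_mapping_sum_single:
  "p = (\<Sum>m\<in>Poly_Mapping.keys p. Poly_Mapping.single m (Poly_Mapping.lookup p m))"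
  by (rule poly_mapping_eqI) (simp add: lookup_sum lookup_single when_def in_keys_iff)

lemma dual_eval_mult_monomial:
  "dual_eval \<psi> (p * Poly_Mapping.single s 1) = dual_eval (\<lambda>t. \<psi> (t + s)) p"
proof -
  have "p * Poly_Mapping.single s 1 =
      (\<Sum>t\<in>Poly_Mapping.keys p. Poly_Mapping.single (t + s) (Poly_Mapping.lookup p t))"
    by (subst poly_mapping_sum_single[of p]) (simp add: sum_distrib_right mult_single)
  then have "dual_eval \<psi> (p * Poly_Mapping.single s 1) =
      (\<Sum>t\<in>Poly_Mapping.keys p. Poly_Mapping.lookup p t * \<psi> (t + s))"
    by (simp add: dual_eval_sum)
  then show ?thesis
    by (simp add: dual_eval_def)
qed

definition vanishes_on_monomial_ideal ::
    "((nat \<Rightarrow>\<^sub>0 nat) \<Rightarrow> 'a::comm_ring_1) \<Rightarrow> 'a mpoly list \<Rightarrow> bool" where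
  "vanishes_on_monomial_ideal \<psi> gs \<longleftrightarrow>
     (\<forall>g\<in>set gs. \<exists>s. g = Poly_Mapping.single s 1 \<and> (\<forall>t. \<psi> (t + s) = 0))"

definition lin_form_annihilates :: "nat \<Rightarrow> ((nat \<Rightarrow>\<^sub>0 nat) \<Rightarrow> 'a::comm_ring_1) \<Rightarrow> bool" where
  "lin_form_annihilates n \<psi> \<longleftrightarrow> (\<forall>t. (\<Sum>i<n. \<psi> (t + Poly_Mapping.single i 1)) = 0)"

lemma dual_eval_in_ideal:
  assumes "vanishes_on_monomial_ideal \<psi> gs" and "in_ideal n gs p"
  shows "dual_eval \<psi> p = 0"
proof -
  obtain c where p: "p = (\<Sum>k<length gs. c k * gs ! k)"
    using assms(2) unfolding in_ideal_def by blast
  have "dual_eval \<psi> (c k * gs ! k) = 0" if k: "k < length gs" for k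
  proof -
    obtain s where "gs ! k = Poly_Mapping.single s 1" and "\<forall>t. \<psi> (t + s) = 0"
      using assms(1) nth_mem[OF k] unfolding vanishes_on_monomial_ideal_def by blast
    then show ?thesis
      by (simp add: dual_eval_mult_monomial)
  qed
  then show ?thesis
    by (simp add: p dual_eval_sum)
qed

lemma dual_eval_lin_form_mult:
  assumes "lin_form_annihilates n \<psi>"
  shows "dual_eval \<psi> (lin_form n * f) = 0"
proof -
  have "lin_form n * f = (\<Sum>i<n. f * Poly_Mapping.single (Poly_Mapping.single i 1) 1)"
    by (simp add: lin_form_def Var_def sum_distrib_left mult.commute)
  then have "dual_eval \<psi> (lin_form n * f) =
      dual_eval (\<lambda>t. \<Sum>i<n. \<psi> (t + Poly_Mapping.single i 1)) f"
    by (simp add: dual_eval_sum dual_eval_mult_monomial dual_eval_sum_weights)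
  also have "\<dots> = 0"
    using assms by (simp add: lin_form_annihilates_def)
  finally show ?thesis .
qed

lemma not_mult_surjective_by_dual:
  assumes "vanishes_on_monomial_ideal \<psi> gs" and "lin_form_annihilates n \<psi>"
    and "in_vars n g" and "homog (Suc i) g" and "dual_eval \<psi> g \<noteq> 0"
  shows "\<not> mult_surjective n gs i"
proof
  assume "mult_surjective n gs i"
  then obtain f where "in_ideal n gs (g - lin_form n * f)"
    using assms(3,4) unfolding mult_surjective_def by blast
  then have "dual_eval \<psi> (g - lin_form n * f) = 0"
    using assms(1) by (simp add: dual_eval_in_ideal)
  then show False
    using assms(2,5) by (simp add: dual_eval_diff dual_eval_lin_form_mult)
qed

lemma not_mult_injective_by_dual:
  assumes "vanishes_on_monomial_ideal \<psi> gs"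
    and "in_vars n f" and "homog i f" and "in_ideal n gs (lin_form n * f)" and "dual_eval \<psi> f \<noteq> 0"
  shows "\<not> mult_injective n gs i"
  using assms dual_eval_in_ideal unfolding mult_injective_def by blast

definition cubes_and_x0x1x2 :: "'a::comm_ring_1 mpoly list" where
  "cubes_and_x0x1x2 =
     [Var 0 ^ 3, Var 1 ^ 3, Var 2 ^ 3, Var 3 ^ 3, Var 4 ^ 3, Var 5 ^ 3, Var 0 * Var 1 * Var 2]"

lemma vanishes_on_cubes_and_x0x1x2:
  assumes cube: "\<And>m i. i < 6 \<Longrightarrow> 3 \<le> Poly_Mapping.lookup m i \<Longrightarrow> \<psi> m = 0"
    and x0x1x2: "\<And>m. 1 \<le> Poly_Mapping.lookup m 0 \<Longrightarrow> 1 \<le> Poly_Mapping.lookup m 1 \<Longrightarrow>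
        1 \<le> Poly_Mapping.lookup m 2 \<Longrightarrow> \<psi> m = 0"
  shows "vanishes_on_monomial_ideal \<psi> cubes_and_x0x1x2"
proof -
  have cube_gen: "\<exists>s. Var i ^ 3 = Poly_Mapping.single s 1 \<and> (\<forall>t. \<psi> (t + s) = 0)"
    if "i < 6" for i
    using cube[OF that] by (auto simp: Var_power lookup_add)
  have "\<exists>s. Var 0 * Var 1 * Var 2 = Poly_Mapping.single s 1 \<and> (\<forall>t. \<psi> (t + s) = 0)"
    using x0x1x2 by (auto simp: Var_def mult_single lookup_add lookup_single)
  with cube_gen[of 0] cube_gen[of 1] cube_gen[of 2] cube_gen[of 3] cube_gen[of 4] cube_gen[of 5]
  show ?thesis
    by (simp add: vanishes_on_monomial_ideal_def cubes_and_x0x1x2_def)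
qed

definition cubes_cofactor :: "'a::comm_ring_1 \<Rightarrow> 'a \<Rightarrow> 'a \<Rightarrow> 'a" where
  "cubes_cofactor x y z = x * x + y * y + z * z - x * y - x * z - y * z"

definition vandermonde3 :: "'a::comm_ring_1 \<Rightarrow> 'a \<Rightarrow> 'a \<Rightarrow> 'a" where
  "vandermonde3 x y z = (x - y) * (y - z) * (x - z)"

lemma sum3_mult_cubes_cofactor:
  "(x + y + z) * cubes_cofactor x y z = x ^ 3 + y ^ 3 + z ^ 3 - 3 * (x * y * z)"
  by (simp add: cubes_cofactor_def algebra_simps power3_eq_cube)

lemma sum3_mult_vandermonde3:
  "(x + y + z) * vandermonde3 x y z = (y - z) * x ^ 3 + (z - x) * y ^ 3 + (x - y) * z ^ 3"
  by (simp add: vandermonde3_def algebra_simps power3_eq_cube)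

lemma in_vars_cubes_cofactor:
  "in_vars n x \<Longrightarrow> in_vars n y \<Longrightarrow> in_vars n z \<Longrightarrow> in_vars n (cubes_cofactor x y z)"
  unfolding cubes_cofactor_def by (intro in_vars_add in_vars_diff in_vars_mult)

lemma in_vars_vandermonde3:
  "in_vars n x \<Longrightarrow> in_vars n y \<Longrightarrow> in_vars n z \<Longrightarrow> in_vars n (vandermonde3 x y z)"
  unfolding vandermonde3_def by (intro in_vars_diff in_vars_mult)

lemma homog_cubes_cofactor:
  assumes "homog 1 x" and "homog 1 y" and "homog 1 z"
  shows "homog 2 (cubes_cofactor x y z)"
proof -
  have quadratic: "homog 2 (u * v)" if "homog 1 u" and "homog 1 v" for u v :: "'a mpoly"
    using homog_mult[OF that] by (simp add: numeral_2_eq_2)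
  show ?thesis
    unfolding cubes_cofactor_def by (intro homog_add homog_diff quadratic assms)
qed

lemma homog_vandermonde3:
  assumes "homog 1 x" and "homog 1 y" and "homog 1 z"
  shows "homog 3 (vandermonde3 x y z)"
proof -
  have "homog (1 + 1 + 1) (vandermonde3 x y z)"
    unfolding vandermonde3_def by (intro homog_mult homog_diff assms)
  then show ?thesis
    by (simp add: numeral_3_eq_3)
qed

(* the coefficient of x^a y^b z^c in vandermonde3 x y z *)
definition vandermonde_coeff :: "nat \<Rightarrow> nat \<Rightarrow> nat \<Rightarrow> 'a::comm_ring_1" where
  "vandermonde_coeff a b c =
    (if (a, b, c) = (2, 1, 0) then 1
     else if (a, b, c) = (2, 0, 1) then -1
     else if (a, b, c) = (1, 2, 0) then -1
     else if (a, b, c) = (0, 2, 1) then 1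
     else if (a, b, c) = (1, 0, 2) then 1
     else if (a, b, c) = (0, 1, 2) then -1
     else 0)"

lemma vandermonde_coeff_contract:
  "vandermonde_coeff (Suc a) b c + vandermonde_coeff a (Suc b) c + vandermonde_coeff a b (Suc c) = 0"
  by (auto simp: vandermonde_coeff_def)

lemma vandermonde_coeff_eq_0_if_cube:
  "3 \<le> a \<or> 3 \<le> b \<or> 3 \<le> c \<Longrightarrow> vandermonde_coeff a b c = 0"
  by (auto simp: vandermonde_coeff_def)

lemma vandermonde_coeff_eq_0_if_all_pos:
  "1 \<le> a \<Longrightarrow> 1 \<le> b \<Longrightarrow> 1 \<le> c \<Longrightarrow> vandermonde_coeff a b c = 0"
  by (auto simp: vandermonde_coeff_def)

definition vandermonde_weight :: "(nat \<Rightarrow>\<^sub>0 nat) \<Rightarrow> 'a::comm_ring_1" where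
  "vandermonde_weight m =
     vandermonde_coeff (Poly_Mapping.lookup m 0) (Poly_Mapping.lookup m 1) (Poly_Mapping.lookup m 2) *
     vandermonde_coeff (Poly_Mapping.lookup m 3) (Poly_Mapping.lookup m 4) (Poly_Mapping.lookup m 5)"

lemma lin_form_annihilates_vandermonde_weight: "lin_form_annihilates 6 vandermonde_weight"
  unfolding lin_form_annihilates_def
proof
  fix t :: "nat \<Rightarrow>\<^sub>0 nat"
  let ?e = "Poly_Mapping.lookup t"
  have "{..<6::nat} = {0, 1, 2, 3, 4, 5}"
    by auto
  then have "(\<Sum>i<6. vandermonde_weight (t + Poly_Mapping.single i 1)) =
      (vandermonde_coeff (Suc (?e 0)) (?e 1) (?e 2) + vandermonde_coeff (?e 0) (Suc (?e 1)) (?e 2)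
         + vandermonde_coeff (?e 0) (?e 1) (Suc (?e 2))) * vandermonde_coeff (?e 3) (?e 4) (?e 5)
     + vandermonde_coeff (?e 0) (?e 1) (?e 2) *
        (vandermonde_coeff (Suc (?e 3)) (?e 4) (?e 5) + vandermonde_coeff (?e 3) (Suc (?e 4)) (?e 5)
         + vandermonde_coeff (?e 3) (?e 4) (Suc (?e 5)))"
    by (simp add: vandermonde_weight_def lookup_add lookup_single algebra_simps)
  then show "(\<Sum>i<6. vandermonde_weight (t + Poly_Mapping.single i 1)) = 0"
    by (simp add: vandermonde_coeff_contract)
qed

lemma vanishes_on_cubes_and_x0x1x2_vandermonde_weight:
  "vanishes_on_monomial_ideal vandermonde_weight cubes_and_x0x1x2"
proof (rule vanishes_on_cubes_and_x0x1x2)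
  fix m :: "nat \<Rightarrow>\<^sub>0 nat" and i :: nat
  assume "i < 6" and "3 \<le> Poly_Mapping.lookup m i"
  then have "i \<in> {0, 1, 2, 3, 4, 5}"
    by auto
  with \<open>3 \<le> Poly_Mapping.lookup m i\<close> show "vandermonde_weight m = 0"
    by (auto simp: vandermonde_weight_def vandermonde_coeff_eq_0_if_cube)
qed (simp add: vandermonde_weight_def vandermonde_coeff_eq_0_if_all_pos)

definition x0sq_x3sq_x4_weight :: "(nat \<Rightarrow>\<^sub>0 nat) \<Rightarrow> 'a::comm_ring_1" where
  "x0sq_x3sq_x4_weight m =
     (if map (Poly_Mapping.lookup m) [0, 1, 2, 3, 4, 5] = [2, 0, 0, 2, 1, 0] then 1 else 0)"

lemma vanishes_on_cubes_and_x0x1x2_x0sq_x3sq_x4_weight: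
  "vanishes_on_monomial_ideal x0sq_x3sq_x4_weight cubes_and_x0x1x2"
proof (rule vanishes_on_cubes_and_x0x1x2)
  fix m :: "nat \<Rightarrow>\<^sub>0 nat" and i :: nat
  assume "i < 6" and "3 \<le> Poly_Mapping.lookup m i"
  then have "i \<in> {0, 1, 2, 3, 4, 5}"
    by auto
  with \<open>3 \<le> Poly_Mapping.lookup m i\<close> show "x0sq_x3sq_x4_weight m = 0"
    by (auto simp: x0sq_x3sq_x4_weight_def)
qed (simp add: x0sq_x3sq_x4_weight_def)

lemma cubes_and_x0x1x2_not_mult_surjective:
  "\<not> mult_surjective 6 (cubes_and_x0x1x2 :: 'a::comm_ring_1 mpoly list) 5"
proof (rule not_mult_surjective_by_dual)
  let ?m = "Poly_Mapping.single 0 2 + Poly_Mapping.single 1 1 + Poly_Mapping.single 3 2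
    + Poly_Mapping.single 4 (1::nat)"
  show "in_vars 6 (Poly_Mapping.single ?m (1::'a))"
    by (auto simp del: single_numeral simp: in_vars_def dest!: keys_add[THEN subsetD])
  show "homog (Suc 5) (Poly_Mapping.single ?m (1::'a))"
    by (simp del: single_numeral add: homog_def mdeg_add mdeg_single)
  show "dual_eval vandermonde_weight (Poly_Mapping.single ?m (1::'a)) \<noteq> 0"
    by (simp del: single_numeral add: vandermonde_weight_def vandermonde_coeff_def lookup_add lookup_single)
qed (fact vanishes_on_cubes_and_x0x1x2_vandermonde_weight lin_form_annihilates_vandermonde_weight)+

definition cofactor_vandermonde :: "'a::comm_ring_1 mpoly" where
  "cofactor_vandermonde = cubes_cofactor (Var 0) (Var 1) (Var 2) * vandermonde3 (Var 3) (Var 4) (Var 5)"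

lemma in_vars_cofactor_vandermonde: "in_vars 6 cofactor_vandermonde"
  unfolding cofactor_vandermonde_def
  by (intro in_vars_mult in_vars_cubes_cofactor in_vars_vandermonde3 in_vars_Var) simp_all

lemma homog_cofactor_vandermonde: "homog 5 cofactor_vandermonde"
  using homog_mult[OF homog_cubes_cofactor homog_vandermonde3, OF homog_Var homog_Var homog_Var
      homog_Var homog_Var homog_Var]
  by (simp add: cofactor_vandermonde_def)

lemma lin_form_mult_cofactor_vandermonde_in_ideal:
  "in_ideal 6 cubes_and_x0x1x2 (lin_form 6 * cofactor_vandermonde)"
proof -
  define x :: "nat \<Rightarrow> 'a mpoly" where "x = Var"
  define P where "P = cubes_cofactor (x 0) (x 1) (x 2)"
  define V where "V = vandermonde3 (x 3) (x 4) (x 5)"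
  have x_in_vars: "in_vars 6 (x i)" if "i < 6" for i
    using that by (simp add: x_def in_vars_Var)
  have cube: "in_ideal 6 cubes_and_x0x1x2 (x i ^ 3)" if "i \<in> {0, 1, 2, 3, 4, 5}" for i
    using that by (intro in_ideal_generator) (auto simp: cubes_and_x0x1x2_def x_def)
  have x0x1x2: "in_ideal 6 cubes_and_x0x1x2 (x 0 * x 1 * x 2)"
    by (intro in_ideal_generator) (simp add: cubes_and_x0x1x2_def x_def)
  have "in_ideal 6 cubes_and_x0x1x2 (x 0 ^ 3 + x 1 ^ 3 + x 2 ^ 3 - 3 * (x 0 * x 1 * x 2))"
    by (intro in_ideal_diff in_ideal_add in_ideal_mult_left[OF in_vars_numeral x0x1x2] cube) simp_all
  then have V_part:
      "in_ideal 6 cubes_and_x0x1x2 (V * (x 0 ^ 3 + x 1 ^ 3 + x 2 ^ 3 - 3 * (x 0 * x 1 * x 2)))"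
    unfolding V_def by (intro in_ideal_mult_left in_vars_vandermonde3 x_in_vars) simp_all
  have "in_ideal 6 cubes_and_x0x1x2 ((x 4 - x 5) * x 3 ^ 3 + (x 5 - x 3) * x 4 ^ 3 + (x 3 - x 4) * x 5 ^ 3)"
    by (intro in_ideal_add in_ideal_mult_left in_vars_diff x_in_vars cube) simp_all
  then have P_part: "in_ideal 6 cubes_and_x0x1x2
      (P * ((x 4 - x 5) * x 3 ^ 3 + (x 5 - x 3) * x 4 ^ 3 + (x 3 - x 4) * x 5 ^ 3))"
    unfolding P_def by (intro in_ideal_mult_left in_vars_cubes_cofactor x_in_vars) simp_all
  have "lin_form 6 = (x 0 + x 1 + x 2) + (x 3 + x 4 + x 5)"
    by (simp add: lin_form_def x_def numeral_eq_Suc ac_simps)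
  then have "lin_form 6 * cofactor_vandermonde =
      V * ((x 0 + x 1 + x 2) * P) + P * ((x 3 + x 4 + x 5) * V)"
    by (simp add: cofactor_vandermonde_def P_def V_def x_def algebra_simps)
  also have "\<dots> = V * (x 0 ^ 3 + x 1 ^ 3 + x 2 ^ 3 - 3 * (x 0 * x 1 * x 2))
      + P * ((x 4 - x 5) * x 3 ^ 3 + (x 5 - x 3) * x 4 ^ 3 + (x 3 - x 4) * x 5 ^ 3)"
    by (simp only: P_def V_def sum3_mult_cubes_cofactor sum3_mult_vandermonde3)
  finally show ?thesis
    using in_ideal_add[OF V_part P_part] by simp
qed

lemma dual_eval_x0sq_x3sq_x4_weight_cofactor_vandermonde:
  "dual_eval x0sq_x3sq_x4_weight cofactor_vandermonde = 1"
  by (simp add: cofactor_vandermonde_def cubes_cofactor_def vandermonde3_def Var_def ring_distribs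
      mult_single dual_eval_add dual_eval_diff x0sq_x3sq_x4_weight_def lookup_add lookup_single)

lemma cubes_and_x0x1x2_not_mult_injective:
  "\<not> mult_injective 6 (cubes_and_x0x1x2 :: 'a::comm_ring_1 mpoly list) 5"
  by (rule not_mult_injective_by_dual[OF vanishes_on_cubes_and_x0x1x2_x0sq_x3sq_x4_weight
        in_vars_cofactor_vandermonde homog_cofactor_vandermonde
        lin_form_mult_cofactor_vandermonde_in_ideal])
    (simp add: dual_eval_x0sq_x3sq_x4_weight_cofactor_vandermonde)

theorem lemma5p5:
  shows "fails_WLP_in_degree 6
           [Var 0 ^ 3, Var 1 ^ 3, Var 2 ^ 3, Var 3 ^ 3, Var 4 ^ 3, Var 5 ^ 3,
            Var 0 * Var 1 * Var 2 :: ('k::field_char_0) mpoly] 5"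
  using cubes_and_x0x1x2_not_mult_injective cubes_and_x0x1x2_not_mult_surjective
  unfolding fails_WLP_in_degree_def cubes_and_x0x1x2_def by blast

end
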